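(* For all $i\in[1,n-1]$, $j'(i)\le j'(i+1)$.
   Context: Let $v_1,\dots,v_n$ be points of a metric space with metric $|\cdot|$ (symmetric, nonnegative, $|v_iv_j|=0$ iff $i=j$, triangle inequality). For $i\le j$ let $d_P(v_i,v_j)=\sum_{k=i}^{j-1}|v_kv_{k+1}|$ and $d_P(v_j,v_i)=d_P(v_i,v_j)$. For $1\le i\le j\le n$: $\beta(i,j)=\max_{k\in[i,j]}\min\{d_P(v_i,v_k),|v_iv_j|+d_P(v_k,v_j)\}$; $\gamma(i,j)=|v_iv_j|+d_P(v_j,v_n)$ if $j<n$ and $\gamma(i,n)=0$. For $i\in[1,n]$, $j'(i)$ is the smallest index $j\in[i,n]$ with $\gamma(i,j)\le\beta(i,j)$. *)

theory Defs
  imports "HOL-Analysis.Analysis"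
begin

text \<open>Points v_1,...,v_n of a metric space are given as v :: nat => 'a (metric_space),
  only the values at indices 1..n matter. |v_i v_j| is dist (v i) (v j).\<close>

definition dP :: "(nat \<Rightarrow> 'a::metric_space) \<Rightarrow> nat \<Rightarrow> nat \<Rightarrow> real" where
  "dP v i j = (\<Sum>k\<in>{min i j..<max i j}. dist (v k) (v (Suc k)))"

definition beta :: "(nat \<Rightarrow> 'a::metric_space) \<Rightarrow> nat \<Rightarrow> nat \<Rightarrow> real" where
  "beta v i j = Max ((\<lambda>k. min (dP v i k) (dist (v i) (v j) + dP v k j)) ` {i..j})"

definition gamma :: "(nat \<Rightarrow> 'a::metric_space) \<Rightarrow> nat \<Rightarrow> nat \<Rightarrow> nat \<Rightarrow> real" where
  "gamma v n i j = (if j < n then dist (v i) (v j) + dP v j n else 0)"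

definition jprime :: "(nat \<Rightarrow> 'a::metric_space) \<Rightarrow> nat \<Rightarrow> nat \<Rightarrow> nat" where
  "jprime v n i = (LEAST j. i \<le> j \<and> j \<le> n \<and> gamma v n i j \<le> beta v i j)"

end

theory Submission
  imports Defs
begin

text \<open>If \<open>\<gamma>(i+1,j) \<le> \<beta>(i+1,j)\<close> then also \<open>\<gamma>(i,j) \<le> \<beta>(i,j)\<close>: the index \<open>k\<close> attaining
  \<open>\<beta>(i+1,j)\<close> works for \<open>\<beta>(i,j)\<close> too, since prolonging the path by the edge \<open>v\<^sub>i v\<^sub>i\<^sub>+\<^sub>1\<close>
  increases \<open>d\<^sub>P(v\<^sub>i,v\<^sub>k)\<close> by exactly \<open>|v\<^sub>iv\<^sub>i\<^sub>+\<^sub>1|\<close>, while by the triangle inequality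
  \<open>|v\<^sub>iv\<^sub>j|\<close> grows by at most that much. Hence the set of admissible \<open>j\<close> only shrinks as
  \<open>i\<close> increases, and its least element \<open>j'(i)\<close> can only move to the right.\<close>

lemma dP_nonneg: "0 \<le> dP v i j"
  unfolding dP_def by (intro sum_nonneg) auto

lemma dP_Suc_left: "i < k \<Longrightarrow> dP v i k = dist (v i) (v (Suc i)) + dP v (Suc i) k"
  unfolding dP_def by (simp add: min_def max_def sum.atLeast_Suc_lessThan)

lemma beta_ge:
  assumes "k \<in> {i..j}"
  shows "min (dP v i k) (dist (v i) (v j) + dP v k j) \<le> beta v i j"
  unfolding beta_def using assms by (intro Max_ge) auto

lemma beta_attained:
  assumes "i \<le> j"
  obtains k where "k \<in> {i..j}" and "beta v i j = min (dP v i k) (dist (v i) (v j) + dP v k j)"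
proof -
  have "beta v i j \<in> (\<lambda>k. min (dP v i k) (dist (v i) (v j) + dP v k j)) ` {i..j}"
    unfolding beta_def using assms by (intro Max_in) auto
  then show ?thesis using that by blast
qed

lemma beta_nonneg:
  assumes "i \<le> j"
  shows "0 \<le> beta v i j"
proof -
  have "0 \<le> min (dP v i i) (dist (v i) (v j) + dP v i j)"
    using dP_nonneg[of v] by simp
  also have "\<dots> \<le> beta v i j"
    using assms by (intro beta_ge) auto
  finally show ?thesis .
qed

lemma gamma_le_beta_last: "i \<le> n \<Longrightarrow> gamma v n i n \<le> beta v i n"
  by (simp add: gamma_def beta_nonneg)

lemma jprime_spec:
  assumes "i \<le> n"
  shows "i \<le> jprime v n i" "jprime v n i \<le> n"
    "gamma v n i (jprime v n i) \<le> beta v i (jprime v n i)"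
proof -
  have "i \<le> n \<and> n \<le> n \<and> gamma v n i n \<le> beta v i n"
    using assms gamma_le_beta_last by simp
  then have "i \<le> jprime v n i \<and> jprime v n i \<le> n
      \<and> gamma v n i (jprime v n i) \<le> beta v i (jprime v n i)"
    unfolding jprime_def by (rule LeastI)
  then show "i \<le> jprime v n i" "jprime v n i \<le> n"
    "gamma v n i (jprime v n i) \<le> beta v i (jprime v n i)" by auto
qed

lemma jprime_le:
  "i \<le> j \<Longrightarrow> j \<le> n \<Longrightarrow> gamma v n i j \<le> beta v i j \<Longrightarrow> jprime v n i \<le> j"
  unfolding jprime_def by (rule Least_le) simp

lemma gamma_le_beta_Suc_left:
  assumes "Suc i \<le> j" and gb: "gamma v n (Suc i) j \<le> beta v (Suc i) j"
  shows "gamma v n i j \<le> beta v i j"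
proof (cases "j < n")
  case False
  then show ?thesis using assms by (simp add: gamma_def beta_nonneg)
next
  case True
  obtain k where k: "k \<in> {Suc i..j}"
    and beta_k: "beta v (Suc i) j = min (dP v (Suc i) k) (dist (v (Suc i)) (v j) + dP v k j)"
    using beta_attained[OF \<open>Suc i \<le> j\<close>] by blast
  have path: "dist (v (Suc i)) (v j) + dP v j n \<le> dP v (Suc i) k"
    and tail: "dP v j n \<le> dP v k j"
    using gb True beta_k by (simp_all add: gamma_def)
  have "dP v i k = dist (v i) (v (Suc i)) + dP v (Suc i) k"
    using k by (intro dP_Suc_left) auto
  moreover have "dist (v i) (v j) \<le> dist (v i) (v (Suc i)) + dist (v (Suc i)) (v j)"
    by (rule dist_triangle)
  ultimately have "dist (v i) (v j) + dP v j n \<le> min (dP v i k) (dist (v i) (v j) + dP v k j)"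
    using path tail by simp
  also have "\<dots> \<le> beta v i j"
    using k by (intro beta_ge) auto
  finally show ?thesis using True by (simp add: gamma_def)
qed

theorem lemma5:
  fixes v :: "nat \<Rightarrow> 'a::metric_space" and n i :: nat
  assumes "inj_on v {1..n}"
    and "1 \<le> i" and "i \<le> n - 1"
  shows "jprime v n i \<le> jprime v n (i + 1)"
proof -
  define j where "j = jprime v n (Suc i)"
  have "Suc i \<le> n" using assms by linarith
  note spec = jprime_spec[OF this, of v, folded j_def]
  have "i \<le> j" using spec(1) by simp
  then have "jprime v n i \<le> j"
    using spec(2) gamma_le_beta_Suc_left[OF spec(1,3)] by (rule jprime_le)
  then show ?thesis by (simp add: j_def)
qed

end
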